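(* Let $n\in\mathbb{N}$ and $a_0,a_1,a_2\in\mathbb{R}$ with $a_0\neq0$, and suppose the roots $\lambda_1,\lambda_2$ of $a_0\lambda^2+a_1\lambda+a_2=0$ are real and nonzero. Then the equation $a_0\bm{x}''+a_1\bm{x}'+a_2\bm{x}=\bm{0}$ is Ulam stable on $\mathbb{R}$, and its minimum Ulam constant is $\dfrac{1}{|a_0\lambda_1\lambda_2|}$.
   Context: $\|\cdot\|$ is a norm on $\mathbb{C}^n$. Ulam stability: the equation $\alpha(t)\bm{x}''+\beta(t)\bm{x}'+\gamma(t)\bm{x}=\bm{f}(t)$ is Ulam stable on $I$ if there exists a constant $L>0$ such that for every $\varepsilon>0$ and every $\bm{\xi}\in C^2(I,\mathbb{C}^n)$ with $\sup_{t\in I}\|\alpha(t)\bm{\xi}''(t)+\beta(t)\bm{\xi}'(t)+\gamma(t)\bm{\xi}(t)-\bm{f}(t)\|\le\varepsilon$, there exists a solution $\bm{x}\in C^2(I,\mathbb{C}^n)$ of the equation with $\sup_{t\in I}\|\bm{\xi}(t)-\bm{x}(t)\|\le L\varepsilon$; such an $L$ is called an Ulam constant for the equation on $I$. The minimum Ulam constant is an Ulam constant $B$ such that no $L<B$ is an Ulam constant. *)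

theory Defs
  imports "HOL-Analysis.Analysis"
begin

definition is_norm_on :: "(complex ^ 'n \<Rightarrow> real) \<Rightarrow> bool" where
  "is_norm_on N \<longleftrightarrow>
     (\<forall>x. 0 \<le> N x) \<and> (\<forall>x. N x = 0 \<longleftrightarrow> x = 0) \<and>
     (\<forall>c x. N (c *s x) = cmod c * N x) \<and> (\<forall>x y. N (x + y) \<le> N x + N y)"

definition C2_on :: "real set \<Rightarrow> (real \<Rightarrow> complex ^ 'n) \<Rightarrow> (real \<Rightarrow> complex ^ 'n)
     \<Rightarrow> (real \<Rightarrow> complex ^ 'n) \<Rightarrow> bool" where
  "C2_on I x x1 x2 \<longleftrightarrow>
     (\<forall>t\<in>I. (x has_vector_derivative x1 t) (at t within I)) \<and>
     (\<forall>t\<in>I. (x1 has_vector_derivative x2 t) (at t within I)) \<and>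
     continuous_on I x2"

definition is_ulam_constant ::
  "(complex ^ 'n \<Rightarrow> real) \<Rightarrow> (real \<Rightarrow> complex) \<Rightarrow> (real \<Rightarrow> complex) \<Rightarrow> (real \<Rightarrow> complex)
   \<Rightarrow> (real \<Rightarrow> complex ^ 'n) \<Rightarrow> real set \<Rightarrow> real \<Rightarrow> bool" where
  "is_ulam_constant N \<alpha> \<beta> \<gamma> f I L \<longleftrightarrow> L > 0 \<and>
     (\<forall>\<epsilon>>0. \<forall>\<xi> \<xi>1 \<xi>2. C2_on I \<xi> \<xi>1 \<xi>2 \<and>
        (\<forall>t\<in>I. N (\<alpha> t *s \<xi>2 t + \<beta> t *s \<xi>1 t + \<gamma> t *s \<xi> t - f t) \<le> \<epsilon>) \<longrightarrow>
        (\<exists>x x1 x2. C2_on I x x1 x2 \<and>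
           (\<forall>t\<in>I. \<alpha> t *s x2 t + \<beta> t *s x1 t + \<gamma> t *s x t = f t) \<and>
           (\<forall>t\<in>I. N (\<xi> t - x t) \<le> L * \<epsilon>)))"

definition ulam_stable ::
  "(complex ^ 'n \<Rightarrow> real) \<Rightarrow> (real \<Rightarrow> complex) \<Rightarrow> (real \<Rightarrow> complex) \<Rightarrow> (real \<Rightarrow> complex)
   \<Rightarrow> (real \<Rightarrow> complex ^ 'n) \<Rightarrow> real set \<Rightarrow> bool" where
  "ulam_stable N \<alpha> \<beta> \<gamma> f I \<longleftrightarrow> (\<exists>L. is_ulam_constant N \<alpha> \<beta> \<gamma> f I L)"

definition is_min_ulam_constant ::
  "(complex ^ 'n \<Rightarrow> real) \<Rightarrow> (real \<Rightarrow> complex) \<Rightarrow> (real \<Rightarrow> complex) \<Rightarrow> (real \<Rightarrow> complex)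
   \<Rightarrow> (real \<Rightarrow> complex ^ 'n) \<Rightarrow> real set \<Rightarrow> real \<Rightarrow> bool" where
  "is_min_ulam_constant N \<alpha> \<beta> \<gamma> f I B \<longleftrightarrow>
     is_ulam_constant N \<alpha> \<beta> \<gamma> f I B \<and> (\<forall>L<B. \<not> is_ulam_constant N \<alpha> \<beta> \<gamma> f I L)"

end

theory Submission
  imports Defs
begin

text \<open>
  The operator factors as a0 (D - l1) (D - l2). For a first-order equation u' - l u = g with
  N g \<le> d, the function exp(-l t) u(t) has derivative of norm at most d exp(-l t), so by a mean
  value inequality for N it converges as t tends to sgn(l) \<infinity>, and its limit c satisfies
  N (u(t) - exp(l t) c) \<le> d / |l|. Applying this to both factors gives the Ulam constant
  1 / |a0 l1 l2|. It is minimal: a constant function e with N e = 1 / |a2| has residual of norm 1,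
  every solution within bounded distance of it is bounded, and the only bounded solution on the
  whole line is 0, because every solution combines exp(l2 t) with the convolution of exp(l1 t)
  and exp(l2 t), and l1, l2 are nonzero.
\<close>

text \<open>exp_conv l1 l2 t is the integral of exp(l1 s) exp(l2 (t - s)) over [0, t], i.e. the solution
  of phi' = l2 phi + exp(l1 t) with phi(0) = 0.\<close>

definition exp_conv :: "real \<Rightarrow> real \<Rightarrow> real \<Rightarrow> real" where
  "exp_conv l1 l2 t =
     (if l1 = l2 then t * exp (l1 * t) else (exp (l1 * t) - exp (l2 * t)) / (l1 - l2))"

lemma has_real_derivative_exp_conv:
  "(exp_conv l1 l2 has_real_derivative l2 * exp_conv l1 l2 t + exp (l1 * t)) (at t)"
proof (cases "l1 = l2")
  case True
  then show ?thesis
    unfolding exp_conv_def[abs_def] by (auto intro!: derivative_eq_intros simp: algebra_simps)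
next
  case False
  have "(exp (l1 * t) * l1 - exp (l2 * t) * l2) / (l1 - l2)
      = l2 * ((exp (l1 * t) - exp (l2 * t)) / (l1 - l2)) + exp (l1 * t)"
    using False by (simp add: divide_simps) (simp add: algebra_simps)
  with False show ?thesis
    unfolding exp_conv_def[abs_def] by (auto intro!: derivative_eq_intros)
qed

lemma exp_conv_add:
  "exp_conv l1 l2 (t + s) = exp (l1 * t) * exp_conv l1 l2 s + exp (l2 * s) * exp_conv l1 l2 t"
proof (cases "l1 = l2")
  case False
  then show ?thesis
    by (simp add: exp_conv_def divide_simps) (simp add: algebra_simps flip: exp_add)
qed (simp add: exp_conv_def algebra_simps flip: exp_add)

lemma exp_conv_0 [simp]: "exp_conv l1 l2 0 = 0"
  by (simp add: exp_conv_def)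

lemma exp_conv_pos:
  assumes "0 < s"
  shows "0 < exp_conv l1 l2 s"
proof -
  have "0 < (exp (l1 * s) - exp (l2 * s)) / (l1 - l2)" if "l1 \<noteq> l2"
    using that assms by (cases "l1 < l2") (auto intro: divide_pos_pos divide_neg_neg)
  with assms show ?thesis by (simp add: exp_conv_def)
qed

lemma has_vector_derivative_self_imp_exp:
  fixes y :: "real \<Rightarrow> 'a::real_normed_vector"
  assumes "\<And>t. (y has_vector_derivative l *\<^sub>R y t) (at t)"
  shows "y t = exp (l * t) *\<^sub>R y 0"
proof -
  have "((\<lambda>t. exp (- l * t) *\<^sub>R y t) has_vector_derivative 0) (at t)" for t
    using assms by (auto intro!: derivative_eq_intros)
  then obtain c where c: "\<And>t. exp (- l * t) *\<^sub>R y t = c"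
    using has_vector_derivative_zero_constant[of UNIV] by auto
  have "y t = exp (l * t) *\<^sub>R (exp (- l * t) *\<^sub>R y t)"
    by (simp flip: exp_add)
  also have "\<dots> = exp (l * t) *\<^sub>R y 0"
    using c[of t] c[of 0] by simp
  finally show ?thesis .
qed

lemma homogeneous_solution_eq:
  fixes x x1 x2 :: "real \<Rightarrow> complex ^ 'n"
  assumes "C2_on UNIV x x1 x2"
    and ode: "\<And>t. x2 t - (l1 + l2) *\<^sub>R x1 t + (l1 * l2) *\<^sub>R x t = 0"
  shows "x t = exp_conv l1 l2 t *\<^sub>R (x1 0 - l2 *\<^sub>R x 0) + exp (l2 * t) *\<^sub>R x 0"
proof -
  have dx: "(x has_vector_derivative x1 t) (at t)"
    and dx1: "(x1 has_vector_derivative x2 t) (at t)" for t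
    using assms(1) by (auto simp: C2_on_def)
  define p where "p = x1 0 - l2 *\<^sub>R x 0"
  have "((\<lambda>t. x1 t - l2 *\<^sub>R x t) has_vector_derivative l1 *\<^sub>R (x1 t - l2 *\<^sub>R x t)) (at t)" for t
  proof -
    have "x2 t - l2 *\<^sub>R x1 t = l1 *\<^sub>R (x1 t - l2 *\<^sub>R x t)"
      using ode[of t] by (simp add: algebra_simps eq_diff_eq)
    with dx dx1 show ?thesis by (auto intro!: derivative_eq_intros)
  qed
  then have y: "x1 t - l2 *\<^sub>R x t = exp (l1 * t) *\<^sub>R p" for t
    unfolding p_def by (rule has_vector_derivative_self_imp_exp)
  have "((\<lambda>t. x t - exp_conv l1 l2 t *\<^sub>R p) has_vector_derivative
          l2 *\<^sub>R (x t - exp_conv l1 l2 t *\<^sub>R p)) (at t)" for t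
  proof -
    have "x1 t - (l2 * exp_conv l1 l2 t + exp (l1 * t)) *\<^sub>R p
        = l2 *\<^sub>R (x t - exp_conv l1 l2 t *\<^sub>R p)"
      using y[of t] by (simp add: algebra_simps eq_diff_eq)
    with dx show ?thesis
      by (auto intro!: derivative_eq_intros has_real_derivative_exp_conv)
  qed
  from has_vector_derivative_self_imp_exp[OF this, of t] show ?thesis
    by (simp add: p_def algebra_simps)
qed

lemma exp_conv_combination_is_solution:
  fixes c1 c2 :: "complex ^ 'n"
  shows "\<exists>x1 x2. C2_on UNIV (\<lambda>t. exp_conv l1 l2 t *\<^sub>R c1 + exp (l2 * t) *\<^sub>R c2) x1 x2
           \<and> (\<forall>t. x2 t - (l1 + l2) *\<^sub>R x1 t
                  + (l1 * l2) *\<^sub>R (exp_conv l1 l2 t *\<^sub>R c1 + exp (l2 * t) *\<^sub>R c2) = 0)"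
proof -
  define x where "x t = exp_conv l1 l2 t *\<^sub>R c1 + exp (l2 * t) *\<^sub>R c2" for t
  define x1 where "x1 t = l2 *\<^sub>R x t + exp (l1 * t) *\<^sub>R c1" for t
  define x2 where "x2 t = l2 *\<^sub>R x1 t + (exp (l1 * t) * l1) *\<^sub>R c1" for t
  have dx: "(x has_vector_derivative x1 t) (at t)" for t
    unfolding x_def x1_def
    by (auto intro!: derivative_eq_intros has_real_derivative_exp_conv simp: algebra_simps)
  have "(x1 has_vector_derivative x2 t) (at t)" for t
    unfolding x2_def x1_def[abs_def] using dx by (auto intro!: derivative_eq_intros simp: x1_def)
  moreover have "continuous_on UNIV x"
    using dx by (metis continuous_at_imp_continuous_on has_vector_derivative_continuous)
  then have "continuous_on UNIV x2"
    unfolding x2_def x1_def by (intro continuous_intros)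
  ultimately have "C2_on UNIV x x1 x2"
    using dx by (simp add: C2_on_def)
  moreover have "x2 t - (l1 + l2) *\<^sub>R x1 t + (l1 * l2) *\<^sub>R x t = 0" for t
    by (simp add: x2_def x1_def algebra_simps)
  ultimately show ?thesis
    unfolding x_def[abs_def] by blast
qed

lemma quadratic_factorization_coeffs:
  fixes a0 a1 a2 l1 l2 :: real
  assumes "\<forall>z::complex. of_real a0 * z^2 + of_real a1 * z + of_real a2
                      = of_real a0 * (z - of_real l1) * (z - of_real l2)"
  shows "a1 = - a0 * (l1 + l2)" "a2 = a0 * l1 * l2"
proof -
  have "complex_of_real a2 = of_real (a0 * l1 * l2)"
    using assms[rule_format, of 0] by simp
  then show a2: "a2 = a0 * l1 * l2"
    by (rule of_real_eq_iff[THEN iffD1])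
  have "complex_of_real (a0 + a1 + a2) = of_real (a0 * (1 - l1) * (1 - l2))"
    using assms[rule_format, of 1] by simp
  then have "a0 + a1 + a2 = a0 * (1 - l1) * (1 - l2)"
    by (rule of_real_eq_iff[THEN iffD1])
  with a2 show "a1 = - a0 * (l1 + l2)"
    by (simp add: algebra_simps)
qed

lemma vector_scalar_mult_of_real: "complex_of_real r *s (v :: complex ^ 'n) = r *\<^sub>R v"
  by (simp add: vec_eq_iff flip: scaleR_conv_of_real)

lemma of_real_coeff_operator_factored:
  assumes "a1 = - a0 * (l1 + l2)" "a2 = a0 * l1 * l2"
  shows "of_real a0 *s v2 + of_real a1 *s v1 + of_real a2 *s (v :: complex ^ 'n)
           = a0 *\<^sub>R (v2 - (l1 + l2) *\<^sub>R v1 + (l1 * l2) *\<^sub>R v)"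
  unfolding assms vector_scalar_mult_of_real by (simp add: algebra_simps)

context
  fixes N :: "complex ^ 'n \<Rightarrow> real"
  assumes N: "is_norm_on N"
begin

lemma norm_on_nonneg: "0 \<le> N x"
  using N by (simp add: is_norm_on_def)

lemma norm_on_eq_0: "N x = 0 \<longleftrightarrow> x = 0"
  using N by (simp add: is_norm_on_def)

lemma norm_on_zero [simp]: "N 0 = 0"
  by (simp add: norm_on_eq_0)

lemma norm_on_pos: "x \<noteq> 0 \<Longrightarrow> 0 < N x"
  using norm_on_nonneg[of x] norm_on_eq_0[of x] by linarith

lemma norm_on_triangle: "N (x + y) \<le> N x + N y"
  using N by (simp add: is_norm_on_def)

lemma norm_on_scaleR: "N (r *\<^sub>R x) = \<bar>r\<bar> * N x"
  using N by (simp add: is_norm_on_def flip: vector_scalar_mult_of_real)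

lemma norm_on_minus: "N (- x) = N x"
  using norm_on_scaleR[of "-1" x] by simp

lemma norm_on_minus_commute: "N (x - y) = N (y - x)"
  using norm_on_minus[of "x - y"] by simp

lemma norm_on_triangle_ineq4: "N (x - y) \<le> N x + N y"
  using norm_on_triangle[of x "- y"] by (simp add: norm_on_minus)

lemma continuous_on_norm_on: "continuous_on UNIV N"
proof (rule convex_on_continuous)
  show "convex_on UNIV N"
  proof (rule convex_onI)
    fix t :: real and x y
    assume "0 < t" "t < 1"
    then show "N ((1 - t) *\<^sub>R x + t *\<^sub>R y) \<le> (1 - t) * N x + t * N y"
      using norm_on_triangle[of "(1 - t) *\<^sub>R x" "t *\<^sub>R y"] by (simp add: norm_on_scaleR)
  qed simp
qed simp

lemma norm_on_lower_bound: "\<exists>m>0. \<forall>x. m * norm x \<le> N x"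
proof -
  obtain x0 :: "complex ^ 'n" where x0: "norm x0 = 1" "\<And>y. norm y = 1 \<Longrightarrow> N x0 \<le> N y"
    using continuous_attains_inf[of "sphere 0 1" N]
      continuous_on_subset[OF continuous_on_norm_on subset_UNIV] by auto
  have "N x0 * norm x \<le> N x" for x
  proof (cases "x = 0")
    case False
    have "N x0 \<le> N ((1 / norm x) *\<^sub>R x)"
      using False by (intro x0(2)) simp
    with False show ?thesis by (simp add: norm_on_scaleR field_simps)
  qed (simp add: norm_on_nonneg)
  moreover have "0 < N x0"
    using x0(1) by (intro norm_on_pos) auto
  ultimately show ?thesis by blast
qed

lemma ex_norm_on_eq:
  assumes "0 \<le> r"
  shows "\<exists>e. N e = r"
proof -
  have "(\<chi> i. (1 :: complex)) \<noteq> 0" by (simp add: vec_eq_iff)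
  then have "0 < N (\<chi> i. 1)" by (rule norm_on_pos)
  with assms have "N ((r / N (\<chi> i. 1)) *\<^sub>R (\<chi> i. 1)) = r"
    by (simp add: norm_on_scaleR)
  then show ?thesis ..
qed

text \<open>A finite-dimensional Hahn--Banach argument: separate \<open>z\<close> from the closed convex
  ball \<open>{y. N y \<le> R}\<close> and rescale the separating functional.\<close>

lemma norm_on_supporting_functional:
  assumes "0 < R" "R < N z"
  shows "\<exists>w. (\<forall>y. inner w y \<le> N y) \<and> R < inner w z"
proof -
  let ?K = "{y. N y \<le> R}"
  have "convex ?K"
  proof (rule convexI)
    fix x y :: "complex ^ 'n" and u v :: real
    assume "x \<in> ?K" "y \<in> ?K" "0 \<le> u" "0 \<le> v" "u + v = 1"
    then have "N (u *\<^sub>R x + v *\<^sub>R y) \<le> u * N x + v * N y"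
      using norm_on_triangle[of "u *\<^sub>R x" "v *\<^sub>R y"] by (simp add: norm_on_scaleR)
    also have "\<dots> \<le> u * R + v * R"
      using \<open>x \<in> ?K\<close> \<open>y \<in> ?K\<close> \<open>0 \<le> u\<close> \<open>0 \<le> v\<close> by (intro add_mono mult_left_mono) auto
    finally show "u *\<^sub>R x + v *\<^sub>R y \<in> ?K"
      using \<open>u + v = 1\<close> by (simp flip: distrib_right)
  qed
  moreover have "closed ?K"
    by (rule closed_Collect_le[OF continuous_on_norm_on continuous_on_const])
  moreover have "z \<notin> ?K"
    using assms(2) by simp
  ultimately obtain a b where ab: "inner a z < b" "\<And>y. N y \<le> R \<Longrightarrow> b < inner a y"
    by (metis (mono_tags) mem_Collect_eq separating_hyperplane_closed_point)
  have "b < 0"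
    using ab(2)[of 0] assms(1) by simp
  define w where "w = (R / b) *\<^sub>R a"
  have "inner w y \<le> N y" for y
  proof (cases "y = 0")
    case False
    then have "0 < N y" by (rule norm_on_pos)
    with assms(1) have "b < (R / N y) * inner a y"
      using ab(2)[of "(R / N y) *\<^sub>R y"] by (simp add: norm_on_scaleR)
    with \<open>0 < N y\<close> have "N y * b \<le> R * inner a y"
      by (simp add: field_simps)
    with \<open>b < 0\<close> show ?thesis
      by (simp add: w_def neg_divide_le_eq)
  qed (simp add: w_def)
  moreover have "R < inner w z"
    using ab(1) \<open>b < 0\<close> assms(1) by (simp add: w_def neg_less_divide_eq)
  ultimately show ?thesis by blast
qed

lemma norm_on_mean_value_inequality:
  fixes f f' :: "real \<Rightarrow> complex ^ 'n"
  assumes f: "\<And>s. (f has_vector_derivative f' s) (at s)"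
    and h: "\<And>s. (h has_real_derivative h' s) (at s)"
    and bound: "\<And>s. N (f' s) \<le> h' s"
    and "a \<le> b"
  shows "N (f b - f a) \<le> h b - h a"
proof (rule ccontr)
  assume "\<not> ?thesis"
  then have gap: "h b - h a < N (f b - f a)" by simp
  have "h a \<le> h b"
  proof (rule DERIV_nonneg_imp_nondecreasing[OF \<open>a \<le> b\<close>])
    fix s
    show "\<exists>y. (h has_real_derivative y) (at s) \<and> 0 \<le> y"
      using h[of s] order_trans[OF norm_on_nonneg bound[of s]] by blast
  qed
  define R where "R = (h b - h a + N (f b - f a)) / 2"
  have "0 < R" "R < N (f b - f a)"
    using gap \<open>h a \<le> h b\<close> by (simp_all add: R_def)
  then obtain w where w: "\<And>y. inner w y \<le> N y" "R < inner w (f b - f a)"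
    using norm_on_supporting_functional by blast
  have "inner w (f b) - h b \<le> inner w (f a) - h a"
  proof (rule DERIV_nonpos_imp_nonincreasing[OF \<open>a \<le> b\<close>])
    fix s
    have "((\<lambda>s. inner w (f s)) has_real_derivative inner w (f' s)) (at s)"
      unfolding has_real_derivative_iff_has_vector_derivative
      by (rule bounded_linear.has_vector_derivative[OF bounded_linear_inner_right f])
    then have "((\<lambda>s. inner w (f s) - h s) has_real_derivative inner w (f' s) - h' s) (at s)"
      using h by (rule DERIV_diff)
    moreover have "inner w (f' s) - h' s \<le> 0"
      using w(1)[of "f' s"] bound[of s] by linarith
    ultimately show "\<exists>y. ((\<lambda>s. inner w (f s) - h s) has_real_derivative y) (at s) \<and> y \<le> 0"
      by blast
  qed
  with w(2) gap show False by (simp add: R_def inner_diff_right)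
qed

lemma norm_on_limit_at_top:
  fixes v :: "real \<Rightarrow> complex ^ 'n"
  assumes decay: "\<And>t s. t \<le> s \<Longrightarrow> N (v s - v t) \<le> B t"
    and B: "(B \<longlongrightarrow> 0) at_top"
  shows "\<exists>c. \<forall>t. N (c - v t) \<le> B t"
proof -
  obtain m where m: "0 < m" "\<And>x. m * norm x \<le> N x"
    using norm_on_lower_bound by blast
  define X where "X n = v (real n)" for n
  have "Cauchy X"
  proof (rule metric_CauchyI)
    fix e :: real
    assume "0 < e"
    with m(1) have "0 < m * e / 2" by simp
    with B have "\<forall>\<^sub>F t in at_top. B t < m * e / 2"
      by (rule order_tendstoD(2))
    then obtain T where T: "\<And>t. T \<le> t \<Longrightarrow> B t < m * e / 2"
      by (auto simp: eventually_at_top_linorder)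
    obtain M :: nat where "T \<le> real M"
      using real_arch_simple by blast
    have "dist (X i) (X j) < e" if "M \<le> i" "M \<le> j" for i j
    proof -
      have "m * dist (X i) (X j) \<le> N ((X i - v M) - (X j - v M))"
        using m(2) by (simp add: dist_norm)
      also have "\<dots> \<le> N (X i - v M) + N (X j - v M)"
        by (rule norm_on_triangle_ineq4)
      also have "\<dots> \<le> 2 * B M"
        using decay[of M i] decay[of M j] that by (simp add: X_def)
      also have "\<dots> < m * e"
        using T \<open>T \<le> real M\<close> by fastforce
      finally show ?thesis
        using m(1) by simp
    qed
    then show "\<exists>M. \<forall>i\<ge>M. \<forall>j\<ge>M. dist (X i) (X j) < e"
      by blast
  qed
  then obtain c where c: "X \<longlonglongrightarrow> c"
    by (auto simp: Cauchy_convergent_iff convergent_def)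
  have "N (c - v t) \<le> B t" for t
  proof (rule LIMSEQ_le_const2)
    show "(\<lambda>n. N (X n - v t)) \<longlonglongrightarrow> N (c - v t)"
      by (intro continuous_on_tendsto_compose[OF continuous_on_norm_on] tendsto_intros c) auto
    obtain n0 :: nat where "t \<le> real n0"
      using real_arch_simple by blast
    then have "N (X n - v t) \<le> B t" if "n0 \<le> n" for n
      using decay[of t "real n"] of_nat_le_iff[THEN iffD2, OF that] by (simp add: X_def)
    then show "\<exists>n0. \<forall>n\<ge>n0. N (X n - v t) \<le> B t"
      by blast
  qed
  then show ?thesis by blast
qed

lemma first_order_stability_pos:
  fixes u u' :: "real \<Rightarrow> complex ^ 'n"
  assumes "0 < l"
    and du: "\<And>t. (u has_vector_derivative u' t) (at t)"
    and bound: "\<And>t. N (u' t - l *\<^sub>R u t) \<le> d"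
  shows "\<exists>c. \<forall>t. N (u t - exp (l * t) *\<^sub>R c) \<le> d / l"
proof -
  have "0 \<le> d"
    using norm_on_nonneg bound order_trans by blast
  define v where "v t = exp (- l * t) *\<^sub>R u t" for t
  have dv: "(v has_vector_derivative exp (- l * t) *\<^sub>R (u' t - l *\<^sub>R u t)) (at t)" for t
    unfolding v_def using du by (auto intro!: derivative_eq_intros simp: algebra_simps)
  have dh: "((\<lambda>t. - d / l * exp (- l * t)) has_real_derivative d * exp (- l * t)) (at t)" for t
    using \<open>0 < l\<close> by (auto intro!: derivative_eq_intros)
  have "N (v s - v t) \<le> d / l * exp (- l * t)" if "t \<le> s" for t s
  proof -
    have "N (v s - v t) \<le> - d / l * exp (- l * s) - (- d / l * exp (- l * t))"
      using dv dh _ that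
    proof (rule norm_on_mean_value_inequality)
      show "N (exp (- l * r) *\<^sub>R (u' r - l *\<^sub>R u r)) \<le> d * exp (- l * r)" for r
        using bound[of r] by (simp add: norm_on_scaleR mult.commute)
    qed
    also have "\<dots> \<le> d / l * exp (- l * t)"
      using \<open>0 \<le> d\<close> \<open>0 < l\<close> by simp
    finally show ?thesis .
  qed
  moreover have "((\<lambda>t. d / l * exp (- l * t)) \<longlongrightarrow> 0) at_top"
    using \<open>0 < l\<close> by (intro tendsto_mult_right_zero filterlim_compose[OF exp_at_bot]
        filterlim_tendsto_neg_mult_at_bot[OF tendsto_const] filterlim_ident) simp
  ultimately obtain c where c: "\<And>t. N (c - v t) \<le> d / l * exp (- l * t)"
    using norm_on_limit_at_top[of v "\<lambda>t. d / l * exp (- l * t)"] by blast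
  have "N (u t - exp (l * t) *\<^sub>R c) \<le> d / l" for t
  proof -
    have "u t - exp (l * t) *\<^sub>R c = exp (l * t) *\<^sub>R (v t - c)"
      by (simp add: v_def algebra_simps flip: exp_add)
    then have "N (u t - exp (l * t) *\<^sub>R c) = exp (l * t) * N (c - v t)"
      by (simp add: norm_on_scaleR norm_on_minus_commute)
    also have "\<dots> \<le> exp (l * t) * (d / l * exp (- l * t))"
      by (rule mult_left_mono[OF c]) simp
    also have "\<dots> = d / l"
      by (simp flip: exp_add)
    finally show ?thesis .
  qed
  then show ?thesis by blast
qed

lemma first_order_stability:
  fixes u u' :: "real \<Rightarrow> complex ^ 'n"
  assumes "l \<noteq> 0"
    and du: "\<And>t. (u has_vector_derivative u' t) (at t)"
    and bound: "\<And>t. N (u' t - l *\<^sub>R u t) \<le> d"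
  shows "\<exists>c. \<forall>t. N (u t - exp (l * t) *\<^sub>R c) \<le> d / \<bar>l\<bar>"
proof (cases "0 < l")
  case True
  then show ?thesis
    using first_order_stability_pos[OF True du bound] by simp
next
  case False
  with \<open>l \<noteq> 0\<close> have "0 < - l" by simp
  moreover have "((\<lambda>t. u (- t)) has_vector_derivative - u' (- t)) (at t)" for t
    using vector_diff_chain_at[OF has_vector_derivative_minus[OF has_vector_derivative_id] du]
    by (simp add: o_def)
  moreover have "N (- u' (- t) - (- l) *\<^sub>R u (- t)) \<le> d" for t
    using bound[of "- t"] by (simp add: norm_on_minus_commute)
  ultimately obtain c where c: "\<And>t. N (u (- t) - exp (- l * t) *\<^sub>R c) \<le> d / - l"
    using first_order_stability_pos[of "- l" "\<lambda>t. u (- t)" "\<lambda>t. - u' (- t)"] by blast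
  have "N (u t - exp (l * t) *\<^sub>R c) \<le> d / \<bar>l\<bar>" for t
    using c[of "- t"] False by simp
  then show ?thesis by blast
qed

lemma exp_scaleR_bounded_eq_0:
  assumes "l \<noteq> 0" and bound: "\<And>t. N (exp (l * t) *\<^sub>R c) \<le> M"
  shows "c = 0"
proof (rule ccontr)
  assume "c \<noteq> 0"
  then have "0 < N c" by (rule norm_on_pos)
  define t where "t = M / (l * N c)"
  have "M < (1 + l * t) * N c"
    using \<open>0 < N c\<close> \<open>l \<noteq> 0\<close> by (simp add: t_def field_simps)
  also have "\<dots> \<le> exp (l * t) * N c"
    using \<open>0 < N c\<close> by (intro mult_right_mono exp_ge_add_one_self) simp
  also have "\<dots> \<le> M"
    using bound[of t] by (simp add: norm_on_scaleR)
  finally show False by simp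
qed

lemma second_order_stability:
  fixes \<xi> \<xi>1 \<xi>2 :: "real \<Rightarrow> complex ^ 'n"
  assumes "l1 \<noteq> 0" "l2 \<noteq> 0" and "C2_on UNIV \<xi> \<xi>1 \<xi>2"
    and residual: "\<And>t. N (\<xi>2 t - (l1 + l2) *\<^sub>R \<xi>1 t + (l1 * l2) *\<^sub>R \<xi> t) \<le> \<delta>"
  shows "\<exists>x x1 x2. C2_on UNIV x x1 x2
           \<and> (\<forall>t. x2 t - (l1 + l2) *\<^sub>R x1 t + (l1 * l2) *\<^sub>R x t = 0)
           \<and> (\<forall>t. N (\<xi> t - x t) \<le> \<delta> / \<bar>l1 * l2\<bar>)"
proof -
  have d\<xi>: "(\<xi> has_vector_derivative \<xi>1 t) (at t)"
    and d\<xi>1: "(\<xi>1 has_vector_derivative \<xi>2 t) (at t)" for t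
    using assms(3) by (auto simp: C2_on_def)
  define \<phi> where "\<phi> = exp_conv l1 l2"
  have d\<phi>: "(\<phi> has_real_derivative l2 * \<phi> t + exp (l1 * t)) (at t)" for t
    unfolding \<phi>_def by (rule has_real_derivative_exp_conv)
  define \<eta> where "\<eta> t = \<xi>1 t - l2 *\<^sub>R \<xi> t" for t
  have "(\<eta> has_vector_derivative \<xi>2 t - l2 *\<^sub>R \<xi>1 t) (at t)" for t
    unfolding \<eta>_def using d\<xi> d\<xi>1 by (auto intro!: derivative_eq_intros)
  moreover have "N ((\<xi>2 t - l2 *\<^sub>R \<xi>1 t) - l1 *\<^sub>R \<eta> t) \<le> \<delta>" for t
    using residual[of t] by (simp add: \<eta>_def algebra_simps)
  ultimately obtain c1 where c1: "\<And>t. N (\<eta> t - exp (l1 * t) *\<^sub>R c1) \<le> \<delta> / \<bar>l1\<bar>"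
    using first_order_stability[OF \<open>l1 \<noteq> 0\<close>, of \<eta> "\<lambda>t. \<xi>2 t - l2 *\<^sub>R \<xi>1 t"] by blast
  define u where "u t = \<xi> t - \<phi> t *\<^sub>R c1" for t
  have "(u has_vector_derivative \<xi>1 t - (l2 * \<phi> t + exp (l1 * t)) *\<^sub>R c1) (at t)" for t
    unfolding u_def using d\<xi> d\<phi> by (auto intro!: derivative_eq_intros)
  moreover have "N ((\<xi>1 t - (l2 * \<phi> t + exp (l1 * t)) *\<^sub>R c1) - l2 *\<^sub>R u t)
      \<le> \<delta> / \<bar>l1\<bar>" for t
    using c1[of t] by (simp add: u_def \<eta>_def algebra_simps)
  ultimately obtain c2 where c2: "\<And>t. N (u t - exp (l2 * t) *\<^sub>R c2) \<le> \<delta> / \<bar>l1\<bar> / \<bar>l2\<bar>"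
    using first_order_stability[OF \<open>l2 \<noteq> 0\<close>,
        of u "\<lambda>t. \<xi>1 t - (l2 * \<phi> t + exp (l1 * t)) *\<^sub>R c1"] by blast
  obtain x1 x2 where "C2_on UNIV (\<lambda>t. \<phi> t *\<^sub>R c1 + exp (l2 * t) *\<^sub>R c2) x1 x2"
    "\<And>t. x2 t - (l1 + l2) *\<^sub>R x1 t + (l1 * l2) *\<^sub>R (\<phi> t *\<^sub>R c1 + exp (l2 * t) *\<^sub>R c2) = 0"
    unfolding \<phi>_def using exp_conv_combination_is_solution by blast
  moreover have "N (\<xi> t - (\<phi> t *\<^sub>R c1 + exp (l2 * t) *\<^sub>R c2)) \<le> \<delta> / \<bar>l1 * l2\<bar>" for t
    using c2[of t] by (simp add: u_def abs_mult diff_diff_eq)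
  ultimately show ?thesis by blast
qed

lemma bounded_homogeneous_solution_eq_0:
  fixes x x1 x2 :: "real \<Rightarrow> complex ^ 'n"
  assumes "l1 \<noteq> 0" "l2 \<noteq> 0" and "C2_on UNIV x x1 x2"
    and "\<And>t. x2 t - (l1 + l2) *\<^sub>R x1 t + (l1 * l2) *\<^sub>R x t = 0"
    and bound: "\<And>t. N (x t) \<le> M"
  shows "x t = 0"
proof -
  define p q where "p = x1 0 - l2 *\<^sub>R x 0" and "q = x 0"
  have x: "x t = exp_conv l1 l2 t *\<^sub>R p + exp (l2 * t) *\<^sub>R q" for t
    unfolding p_def q_def using assms(3,4) by (rule homogeneous_solution_eq)
  \<comment> \<open>shifting by 1 and subtracting exp l2 times x removes the exp(l2 t) component\<close>
  have "x (t + 1) - exp l2 *\<^sub>R x t = exp (l1 * t) *\<^sub>R (exp_conv l1 l2 1 *\<^sub>R p)" for t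
  proof -
    have "exp (l2 * (t + 1)) = exp l2 * exp (l2 * t)"
      by (simp add: distrib_left exp_add)
    then show ?thesis
      unfolding x exp_conv_add by (simp add: algebra_simps)
  qed
  moreover have "N (x (t + 1) - exp l2 *\<^sub>R x t) \<le> M + exp l2 * M" for t
  proof -
    have "N (x (t + 1) - exp l2 *\<^sub>R x t) \<le> N (x (t + 1)) + exp l2 * N (x t)"
      using norm_on_triangle_ineq4[of "x (t + 1)" "exp l2 *\<^sub>R x t"] by (simp add: norm_on_scaleR)
    with bound[of "t + 1"] mult_left_mono[OF bound[of t] exp_ge_zero[of l2]] show ?thesis
      by linarith
  qed
  ultimately have "exp_conv l1 l2 1 *\<^sub>R p = 0"
    using exp_scaleR_bounded_eq_0[OF \<open>l1 \<noteq> 0\<close>] by metis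
  then have "p = 0"
    using exp_conv_pos[of 1 l1 l2] by simp
  then have "N (exp (l2 * t) *\<^sub>R q) \<le> M" for t
    using bound[of t] by (simp add: x)
  then have "q = 0"
    by (rule exp_scaleR_bounded_eq_0[OF \<open>l2 \<noteq> 0\<close>])
  with \<open>p = 0\<close> show ?thesis
    by (simp add: x)
qed

lemma is_ulam_constant_factored:
  assumes "a0 \<noteq> 0" "l1 \<noteq> 0" "l2 \<noteq> 0"
    and a1: "a1 = - a0 * (l1 + l2)" and a2: "a2 = a0 * l1 * l2"
  shows "is_ulam_constant N (\<lambda>_. of_real a0) (\<lambda>_. of_real a1) (\<lambda>_. of_real a2) (\<lambda>_. 0) UNIV
           (1 / \<bar>a0 * l1 * l2\<bar>)"
  unfolding is_ulam_constant_def
proof (intro conjI allI impI)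
  show "0 < 1 / \<bar>a0 * l1 * l2\<bar>"
    using assms(1-3) by simp
  fix \<epsilon> :: real and \<xi> \<xi>1 \<xi>2 :: "real \<Rightarrow> complex ^ 'n"
  assume \<xi>: "C2_on UNIV \<xi> \<xi>1 \<xi>2 \<and>
    (\<forall>t\<in>UNIV. N (of_real a0 *s \<xi>2 t + of_real a1 *s \<xi>1 t + of_real a2 *s \<xi> t - 0) \<le> \<epsilon>)"
  have "\<bar>a0\<bar> * N (\<xi>2 t - (l1 + l2) *\<^sub>R \<xi>1 t + (l1 * l2) *\<^sub>R \<xi> t) \<le> \<epsilon>" for t
    using \<xi> unfolding of_real_coeff_operator_factored[OF a1 a2] by (simp add: norm_on_scaleR)
  then have "N (\<xi>2 t - (l1 + l2) *\<^sub>R \<xi>1 t + (l1 * l2) *\<^sub>R \<xi> t) \<le> \<epsilon> / \<bar>a0\<bar>" for t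
    using assms(1) by (simp add: field_simps mult.commute)
  with \<xi> obtain x x1 x2 where x: "C2_on UNIV x x1 x2"
    "\<And>t. x2 t - (l1 + l2) *\<^sub>R x1 t + (l1 * l2) *\<^sub>R x t = 0"
    "\<And>t. N (\<xi> t - x t) \<le> \<epsilon> / \<bar>a0\<bar> / \<bar>l1 * l2\<bar>"
    using second_order_stability[OF assms(2,3)] by blast
  have "of_real a0 *s x2 t + of_real a1 *s x1 t + of_real a2 *s x t = 0" for t
    unfolding of_real_coeff_operator_factored[OF a1 a2] using x(2) by simp
  moreover have "N (\<xi> t - x t) \<le> 1 / \<bar>a0 * l1 * l2\<bar> * \<epsilon>" for t
    using x(3)[of t] by (simp add: abs_mult)
  ultimately show "\<exists>x x1 x2. C2_on UNIV x x1 x2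
      \<and> (\<forall>t\<in>UNIV. of_real a0 *s x2 t + of_real a1 *s x1 t + of_real a2 *s x t = 0)
      \<and> (\<forall>t\<in>UNIV. N (\<xi> t - x t) \<le> 1 / \<bar>a0 * l1 * l2\<bar> * \<epsilon>)"
    using x(1) by blast
qed

lemma not_is_ulam_constant_below:
  assumes "a0 \<noteq> 0" "l1 \<noteq> 0" "l2 \<noteq> 0"
    and a1: "a1 = - a0 * (l1 + l2)" and a2: "a2 = a0 * l1 * l2"
    and "L < 1 / \<bar>a0 * l1 * l2\<bar>"
  shows "\<not> is_ulam_constant N (\<lambda>_. of_real a0) (\<lambda>_. of_real a1) (\<lambda>_. of_real a2) (\<lambda>_. 0) UNIV L"
proof
  assume L: "is_ulam_constant N (\<lambda>_. of_real a0) (\<lambda>_. of_real a1) (\<lambda>_. of_real a2) (\<lambda>_. 0) UNIV L"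
  have "a2 \<noteq> 0"
    using assms(1-3) a2 by simp
  obtain e where e: "N e = 1 / \<bar>a2\<bar>"
    using ex_norm_on_eq by fastforce
  have "C2_on UNIV (\<lambda>_. e) (\<lambda>_. 0) (\<lambda>_. 0)"
    by (simp add: C2_on_def)
  moreover have "N (of_real a0 *s 0 + of_real a1 *s 0 + of_real a2 *s e - 0) \<le> 1"
    using e \<open>a2 \<noteq> 0\<close> by (simp add: vector_scalar_mult_of_real norm_on_scaleR)
  ultimately obtain x x1 x2 where x: "C2_on UNIV x x1 x2"
    "\<And>t. of_real a0 *s x2 t + of_real a1 *s x1 t + of_real a2 *s x t = 0"
    "\<And>t. N (e - x t) \<le> L"
    using L unfolding is_ulam_constant_def by (metis mult_1_right zero_less_one UNIV_I)
  have "x2 t - (l1 + l2) *\<^sub>R x1 t + (l1 * l2) *\<^sub>R x t = 0" for t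
    using x(2)[of t] assms(1) unfolding of_real_coeff_operator_factored[OF a1 a2] by simp
  moreover have "N (x t) \<le> N e + L" for t
    using norm_on_triangle_ineq4[of e "e - x t"] x(3)[of t] by simp
  ultimately have "x 0 = 0"
    using bounded_homogeneous_solution_eq_0[OF assms(2,3) x(1)] by blast
  then show False
    using x(3)[of 0] e a2 assms(6) by simp
qed

end

theorem corollary4p2:
  fixes N :: "complex ^ 'n \<Rightarrow> real" and a0 a1 a2 l1 l2 :: real
  assumes "is_norm_on N"
    and "a0 \<noteq> 0"
    and "\<forall>z::complex. of_real a0 * z^2 + of_real a1 * z + of_real a2
                      = of_real a0 * (z - of_real l1) * (z - of_real l2)"
    and "l1 \<noteq> 0" and "l2 \<noteq> 0"
  shows "ulam_stable N (\<lambda>_. of_real a0) (\<lambda>_. of_real a1) (\<lambda>_. of_real a2) (\<lambda>_. 0) UNIV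
       \<and> is_min_ulam_constant N (\<lambda>_. of_real a0) (\<lambda>_. of_real a1) (\<lambda>_. of_real a2) (\<lambda>_. 0) UNIV
            (1 / \<bar>a0 * l1 * l2\<bar>)"
proof -
  note hyps = assms(1,2,4,5) quadratic_factorization_coeffs[OF assms(3)]
  have "is_ulam_constant N (\<lambda>_. of_real a0) (\<lambda>_. of_real a1) (\<lambda>_. of_real a2) (\<lambda>_. 0) UNIV
          (1 / \<bar>a0 * l1 * l2\<bar>)"
    by (rule is_ulam_constant_factored[OF hyps])
  moreover have "\<forall>L < 1 / \<bar>a0 * l1 * l2\<bar>.
      \<not> is_ulam_constant N (\<lambda>_. of_real a0) (\<lambda>_. of_real a1) (\<lambda>_. of_real a2) (\<lambda>_. 0) UNIV L"
    using not_is_ulam_constant_below[OF hyps] by blast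
  ultimately show ?thesis
    unfolding ulam_stable_def is_min_ulam_constant_def by blast
qed

end
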